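(* Let $\langle M,\mathsf{S}\rangle$ be a sum structure. Then for all $x\in M$ and $X\subseteq M$: $x\,\mathsf{S}\,X$ if and only if $x\,\mathsf{S}_{\sqsubseteq_{\mathsf{S}}}\,X$.
   Context: For a set $M$ and a relation $\mathsf{S}\subseteq M\times\mathcal{P}(M)$ define: $x\sqsubseteq_{\mathsf{S}} y$ iff there is $X\subseteq M$ with $y\,\mathsf{S}\,X$ and $x\in X$; $\mathrm{I}(x)=\{y\in M\mid y\sqsubseteq_{\mathsf{S}} x\}$ and for $A\subseteq M$, $\mathrm{I}(A)=\bigcup_{a\in A}\mathrm{I}(a)$; $x$ s-overlaps $y$ iff there are $X,Y\subseteq M$ with $x\,\mathsf{S}\,X$, $y\,\mathsf{S}\,Y$, $X\cap Y\neq\emptyset$; a set $A\subseteq M$ is pre-dense in $B\subseteq M$ iff for every $b\in B$ there is $a\in A$ such that $a$ s-overlaps $b$. Overlap w.r.t. $\sqsubseteq_{\mathsf{S}}$: $x\circ y$ iff there is $z\in M$ with $z\sqsubseteq_{\mathsf{S}} x$ and $z\sqsubseteq_{\mathsf{S}} y$. The induced sum: $x\,\mathsf{S}_{\sqsubseteq_{\mathsf{S}}}\,X$ iff every $y\in X$ satisfies $y\sqsubseteq_{\mathsf{S}} x$, and for every $z\in M$ with $z\sqsubseteq_{\mathsf{S}} x$ there is $y\in X$ with $y\circ z$. A sum structure is a pair $\langle M,\mathsf{S}\rangle$ satisfying: (S1) for every non-empty $X\subseteq M$ there is $x\in M$ with $x\,\mathsf{S}\,X$; (S2) $x\,\mathsf{S}\,X\wedge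 y\,\mathsf{S}\,X\to x=y$; (S3) $x\,\mathsf{S}\,X\wedge y\,\mathsf{S}\,Y\wedge x\in Y\to y\,\mathsf{S}\,(X\cup Y)$; (S4) if $x\,\mathsf{S}\,X$, $x\,\mathsf{S}\,Y$ and $y\in Y$, then there are $z\in X$ and $Z,U\subseteq M$ with $z\,\mathsf{S}\,Z$, $y\,\mathsf{S}\,U$ and $Z\cap U\neq\emptyset$; (S5) for all $x\in M$ and $X\subseteq M$: if $X$ is pre-dense in $\mathrm{I}(x)$ then $x\,\mathsf{S}\,(\mathrm{I}(x)\cap\mathrm{I}(X))$. *)

theory Defs
  imports Main
begin

(* A relation S \<subseteq> M \<times> P(M) is represented as a predicate S :: 'a \<Rightarrow> 'a set \<Rightarrow> bool;
   only pairs with x \<in> M and X \<subseteq> M are considered (enforced by sum_structure). *)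

definition sle :: "'a set \<Rightarrow> ('a \<Rightarrow> 'a set \<Rightarrow> bool) \<Rightarrow> 'a \<Rightarrow> 'a \<Rightarrow> bool" where
  "sle M S x y \<longleftrightarrow> (\<exists>X. X \<subseteq> M \<and> S y X \<and> x \<in> X)"

definition Ipt :: "'a set \<Rightarrow> ('a \<Rightarrow> 'a set \<Rightarrow> bool) \<Rightarrow> 'a \<Rightarrow> 'a set" where
  "Ipt M S x = {y \<in> M. sle M S y x}"

definition Iset :: "'a set \<Rightarrow> ('a \<Rightarrow> 'a set \<Rightarrow> bool) \<Rightarrow> 'a set \<Rightarrow> 'a set" where
  "Iset M S A = (\<Union>a\<in>A. Ipt M S a)"

definition soverlaps :: "'a set \<Rightarrow> ('a \<Rightarrow> 'a set \<Rightarrow> bool) \<Rightarrow> 'a \<Rightarrow> 'a \<Rightarrow> bool" where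
  "soverlaps M S x y \<longleftrightarrow> (\<exists>X Y. X \<subseteq> M \<and> Y \<subseteq> M \<and> S x X \<and> S y Y \<and> X \<inter> Y \<noteq> {})"

definition predense :: "'a set \<Rightarrow> ('a \<Rightarrow> 'a set \<Rightarrow> bool) \<Rightarrow> 'a set \<Rightarrow> 'a set \<Rightarrow> bool" where
  "predense M S A B \<longleftrightarrow> (\<forall>b\<in>B. \<exists>a\<in>A. soverlaps M S a b)"

definition ovl :: "'a set \<Rightarrow> ('a \<Rightarrow> 'a set \<Rightarrow> bool) \<Rightarrow> 'a \<Rightarrow> 'a \<Rightarrow> bool" where
  "ovl M S x y \<longleftrightarrow> (\<exists>z\<in>M. sle M S z x \<and> sle M S z y)"

definition induced_sum :: "'a set \<Rightarrow> ('a \<Rightarrow> 'a set \<Rightarrow> bool) \<Rightarrow> 'a \<Rightarrow> 'a set \<Rightarrow> bool" where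
  "induced_sum M S x X \<longleftrightarrow>
     (\<forall>y\<in>X. sle M S y x) \<and> (\<forall>z\<in>M. sle M S z x \<longrightarrow> (\<exists>y\<in>X. ovl M S y z))"

definition sum_structure :: "'a set \<Rightarrow> ('a \<Rightarrow> 'a set \<Rightarrow> bool) \<Rightarrow> bool" where
  "sum_structure M S \<longleftrightarrow>
     (\<forall>x X. S x X \<longrightarrow> x \<in> M \<and> X \<subseteq> M) \<and>
     (\<forall>X. X \<subseteq> M \<and> X \<noteq> {} \<longrightarrow> (\<exists>x\<in>M. S x X)) \<and>
     (\<forall>x y X. S x X \<and> S y X \<longrightarrow> x = y) \<and>
     (\<forall>x y X Y. S x X \<and> S y Y \<and> x \<in> Y \<longrightarrow> S y (X \<union> Y)) \<and>
     (\<forall>x y X Y. S x X \<and> S x Y \<and> y \<in> Y \<longrightarrow>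
        (\<exists>z\<in>X. \<exists>Z U. Z \<subseteq> M \<and> U \<subseteq> M \<and> S z Z \<and> S y U \<and> Z \<inter> U \<noteq> {})) \<and>
     (\<forall>x\<in>M. \<forall>X. X \<subseteq> M \<and> predense M S X (Ipt M S x) \<longrightarrow>
        S x (Ipt M S x \<inter> Iset M S X))"

end

theory Submission
  imports Defs
begin

text \<open>
  By (S4) every sum \<open>x\<close> of \<open>X\<close> is an upper bound of \<open>X\<close> in which \<open>X\<close> is pre-dense, and by
  (S5), with transitivity of \<open>\<sqsubseteq>\<^sub>S\<close> from (S3), every such bound is a sum of \<open>I(X)\<close>.
  So if \<open>X \<noteq> {}\<close> has a sum \<open>v\<close> by (S1), any such bound is a sum of \<open>I(X)\<close> together with \<open>v\<close>
  and equals \<open>v\<close> by (S2): sums are exactly the pre-dense upper bounds. The induced-sum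
  condition expresses the same, once \<open>\<sqsubseteq>\<^sub>S\<close> is known to be reflexive (forcing
  \<open>X \<noteq> {}\<close>); reflexivity, i.e. \<open>x S {x}\<close>, follows from the same uniqueness argument for \<open>{x}\<close>.
\<close>

lemma ovl_imp_soverlaps: "ovl M S x y \<Longrightarrow> soverlaps M S x y"
  unfolding ovl_def soverlaps_def sle_def by blast

lemma soverlaps_imp_ovl: "soverlaps M S x y \<Longrightarrow> ovl M S x y"
  unfolding ovl_def soverlaps_def sle_def by blast

context
  fixes M :: "'a set" and S :: "'a \<Rightarrow> 'a set \<Rightarrow> bool"
  assumes ss: "sum_structure M S"
begin

lemma sum_carrier: "S x X \<Longrightarrow> x \<in> M \<and> X \<subseteq> M"
  using ss unfolding sum_structure_def by metis

lemma sum_exists: "X \<subseteq> M \<Longrightarrow> X \<noteq> {} \<Longrightarrow> \<exists>x\<in>M. S x X"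
  using ss unfolding sum_structure_def by metis

lemma sum_unique: "S x X \<Longrightarrow> S y X \<Longrightarrow> x = y"
  using ss unfolding sum_structure_def by metis

lemma sum_union: "S x X \<Longrightarrow> S y Y \<Longrightarrow> x \<in> Y \<Longrightarrow> S y (X \<union> Y)"
  using ss unfolding sum_structure_def by metis

lemma sum_overlap:
  "S x X \<Longrightarrow> S x Y \<Longrightarrow> y \<in> Y \<Longrightarrow>
    \<exists>z\<in>X. \<exists>Z U. Z \<subseteq> M \<and> U \<subseteq> M \<and> S z Z \<and> S y U \<and> Z \<inter> U \<noteq> {}"
  using ss unfolding sum_structure_def by (elim conjE) ((drule spec)+, erule mp, blast)

lemma sum_Ipt_Iset:
  "x \<in> M \<Longrightarrow> X \<subseteq> M \<Longrightarrow> predense M S X (Ipt M S x) \<Longrightarrow> S x (Ipt M S x \<inter> Iset M S X)"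
  using ss unfolding sum_structure_def
  by (elim conjE) (drule bspec, assumption, drule spec, erule mp, blast)

lemma sle_trans:
  assumes "sle M S a b" "sle M S b c"
  shows "sle M S a c"
proof -
  from assms(1) obtain B where B: "S b B" "a \<in> B" unfolding sle_def by blast
  from assms(2) obtain C where C: "S c C" "b \<in> C" unfolding sle_def by blast
  have "S c (B \<union> C)" using sum_union[OF B(1) C] .
  then show ?thesis unfolding sle_def using B(2) sum_carrier by blast
qed

lemma Ipt_mono: "sle M S x y \<Longrightarrow> Ipt M S x \<subseteq> Ipt M S y"
  using sle_trans unfolding Ipt_def by blast

lemma Iset_subset_Ipt: "\<forall>y\<in>X. sle M S y x \<Longrightarrow> Iset M S X \<subseteq> Ipt M S x"
  using Ipt_mono unfolding Iset_def by blast

lemma sum_upper: "S x X \<Longrightarrow> y \<in> X \<Longrightarrow> sle M S y x"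
  using sum_carrier unfolding sle_def by blast

lemma sum_predense:
  assumes "S x X"
  shows "predense M S X (Ipt M S x)"
  unfolding predense_def
proof
  fix b assume "b \<in> Ipt M S x"
  then obtain B where "S x B" "b \<in> B" unfolding Ipt_def sle_def by blast
  then show "\<exists>a\<in>X. soverlaps M S a b"
    using sum_overlap[OF assms] unfolding soverlaps_def by blast
qed

lemma sum_Iset:
  assumes "x \<in> M" "X \<subseteq> M" "\<forall>y\<in>X. sle M S y x" "predense M S X (Ipt M S x)"
  shows "S x (Iset M S X)"
  using sum_Ipt_Iset[OF assms(1,2,4)] Iset_subset_Ipt[OF assms(3)] by (simp add: Int_absorb1)

lemma sum_Iset_of_sum:
  assumes "S x X"
  shows "S x (Iset M S X)"
  using sum_carrier[OF assms] sum_upper[OF assms] sum_predense[OF assms] by (simp add: sum_Iset)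

lemma sum_singleton:
  assumes x: "x \<in> M"
  shows "S x {x}"
proof -
  obtain w where w: "S w {x}" using sum_exists[of "{x}"] x by blast
  have I: "Iset M S {x} = Ipt M S x" unfolding Iset_def by simp
  have Sw: "S w (Ipt M S x)" using sum_Iset_of_sum[OF w] unfolding I .
  have "Ipt M S x \<subseteq> Ipt M S w" using Ipt_mono[OF sum_upper[OF w singletonI]] .
  then have "predense M S {x} (Ipt M S x)"
    using sum_predense[OF w] unfolding predense_def by (meson subsetD)
  then have "S x (Ipt M S x \<inter> Iset M S {x})" using sum_Ipt_Iset[OF x] x by blast
  then have "S x (Ipt M S x)" unfolding I by simp
  then have "x = w" using Sw by (rule sum_unique)
  then show ?thesis using w by simp
qed

lemma sle_refl: "x \<in> M \<Longrightarrow> sle M S x x"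
  using sum_singleton unfolding sle_def by blast

lemma sum_of_predense_upper_bound:
  assumes "x \<in> M" "X \<subseteq> M" "X \<noteq> {}" "\<forall>y\<in>X. sle M S y x" "predense M S X (Ipt M S x)"
  shows "S x X"
proof -
  obtain v where v: "S v X" using sum_exists assms(2,3) by blast
  have "S x (Iset M S X)" using sum_Iset assms(1,2,4,5) .
  moreover have "S v (Iset M S X)" using sum_Iset_of_sum[OF v] .
  ultimately have "x = v" by (rule sum_unique)
  then show ?thesis using v by simp
qed

lemma sum_imp_induced_sum:
  assumes "S x X"
  shows "induced_sum M S x X"
  unfolding induced_sum_def
proof (intro conjI ballI impI)
  fix y assume "y \<in> X" then show "sle M S y x" using sum_upper assms by blast
next
  fix z assume "sle M S z x"
  then have "z \<in> Ipt M S x" using sum_carrier unfolding Ipt_def sle_def by blast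
  then show "\<exists>y\<in>X. ovl M S y z"
    using sum_predense[OF assms] soverlaps_imp_ovl unfolding predense_def by metis
qed

lemma induced_sum_imp_sum:
  assumes x: "x \<in> M" and X: "X \<subseteq> M" and ind: "induced_sum M S x X"
  shows "S x X"
proof (rule sum_of_predense_upper_bound[OF x X])
  show le: "\<forall>y\<in>X. sle M S y x" using ind unfolding induced_sum_def by blast
  have cov: "\<forall>z\<in>M. sle M S z x \<longrightarrow> (\<exists>y\<in>X. ovl M S y z)"
    using ind unfolding induced_sum_def by blast
  then show "X \<noteq> {}" using sle_refl x by blast
  show "predense M S X (Ipt M S x)"
    using cov ovl_imp_soverlaps unfolding predense_def Ipt_def by (metis (no_types, lifting) mem_Collect_eq)
qed

end

theorem theorem3p12:
  fixes M :: "'a set" and S :: "'a \<Rightarrow> 'a set \<Rightarrow> bool"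
  assumes "sum_structure M S"
  shows "\<forall>x\<in>M. \<forall>X. X \<subseteq> M \<longrightarrow> (S x X \<longleftrightarrow> induced_sum M S x X)"
  using sum_imp_induced_sum[OF assms] induced_sum_imp_sum[OF assms] by blast

end
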